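(* Let $\mathbb F_q$ be a finite field with $q>2$ elements and let $\mathbb F_q^*=\mathbb F_q\setminus\{0\}$. In the integral group ring $\mathbb Z[\mathrm{SL}_2(\mathbb F_q)]$ consider the seven elements $$A=\left(\begin{array}{cc}\mathbb F_q^*&0\\0&\mathbb F_q^*\end{array}\right),\ B=\left(\begin{array}{cc}0&\mathbb F_q^*\\\mathbb F_q^*&0\end{array}\right),\ C=\left(\begin{array}{cc}\mathbb F_q^*&\mathbb F_q^*\\\mathbb F_q^*&\mathbb F_q^*\end{array}\right),$$ $$D_+=\left(\begin{array}{cc}\mathbb F_q^*&\mathbb F_q^*\\0&\mathbb F_q^*\end{array}\right),\ D_-=\left(\begin{array}{cc}\mathbb F_q^*&0\\\mathbb F_q^*&\mathbb F_q^*\end{array}\right),\ E_+=\left(\begin{array}{cc}\mathbb F_q^*&\mathbb F_q^*\\\mathbb F_q^*&0\end{array}\right),\ E_-=\left(\begin{array}{cc}0&\mathbb F_q^*\\\mathbb F_q^*&\mathbb F_q^*\end{array}\right)$$ (notation explained in the context). Then the $\mathbb Z$-module $$\mathcal{SC}=\mathbb Z A+\mathbb Z B+\mathbb ZC+\mathbb ZD_++\mathbb ZD_-+\mathbb Z E_++\mathbb Z E_-$$ is a subring of $\mathbb Z[\mathrm{SL}_2(\mathbb F_q)]$, i.e. it is closed under the multiplication of the group ring (the product of any two of the seven elements is an integral linear combination of the seven elements).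
   Context: For subsets $\mathcal A,\mathcal B,\mathcal C,\mathcal D$ of $\mathbb F_q$, the symbol $\left(\begin{array}{cc}\mathcal A&\mathcal B\\\mathcal C&\mathcal D\end{array}\right)$ denotes the element $\sum \left(\begin{array}{cc}a&b\\c&d\end{array}\right)$ of $\mathbb Z[\mathrm{SL}_2(\mathbb F_q)]$, where the sum runs over all $(a,b,c,d)\in\mathcal A\times\mathcal B\times\mathcal C\times\mathcal D$ with $ad-bc=1$; an entry $0$ stands for the singleton $\{0\}$. Thus the seven elements are the sums of all matrices of $\mathrm{SL}_2(\mathbb F_q)$ having a prescribed support (set of positions of nonzero entries). The ring $\mathcal{SC}$ need not contain the identity element of the group ring. *)

theory Defs
  imports Main
begin

text \<open>2x2 matrices over a field, written as (a, b, c, d) for the matrix [[a,b],[c,d]].\<close>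
type_synonym 'a mat2 = "'a \<times> 'a \<times> 'a \<times> 'a"

definition SL2 :: "('a::field) mat2 set" where
  "SL2 = {(a, b, c, d). a * d - b * c = 1}"

fun mmul :: "('a::field) mat2 \<Rightarrow> 'a mat2 \<Rightarrow> 'a mat2" where
  "mmul (a, b, c, d) (e, f, g, h) = (a*e + b*g, a*f + b*h, c*e + d*g, c*f + d*h)"

text \<open>Elements of the integral group ring Z[SL_2(F_q)] are represented as integer-valued
  functions on matrices (vanishing outside SL2); the group is finite when the field is.\<close>
type_synonym 'a grpring = "'a mat2 \<Rightarrow> int"

definition gr_mult :: "('a::field) grpring \<Rightarrow> 'a grpring \<Rightarrow> 'a grpring" where
  "gr_mult x y = (\<lambda>g. \<Sum>(h, k) \<in> {(h, k). h \<in> SL2 \<and> k \<in> SL2 \<and> mmul h k = g}. x h * y k)"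

text \<open>The symbol (A B; C D): sum of all matrices in SL2 with entries in the given sets.\<close>
definition supp_elt :: "('a::field) set \<Rightarrow> 'a set \<Rightarrow> 'a set \<Rightarrow> 'a set \<Rightarrow> 'a grpring" where
  "supp_elt SA SB SC SD = (\<lambda>(a, b, c, d).
     if a * d - b * c = 1 \<and> a \<in> SA \<and> b \<in> SB \<and> c \<in> SC \<and> d \<in> SD then 1 else 0)"

definition nzs :: "('a::field) set" where "nzs = UNIV - {0}"
definition zs :: "('a::field) set" where "zs = {0}"

definition elA :: "('a::field) grpring" where "elA = supp_elt nzs zs zs nzs"
definition elB :: "('a::field) grpring" where "elB = supp_elt zs nzs nzs zs"
definition elC :: "('a::field) grpring" where "elC = supp_elt nzs nzs nzs nzs"
definition elDp :: "('a::field) grpring" where "elDp = supp_elt nzs nzs zs nzs"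
definition elDm :: "('a::field) grpring" where "elDm = supp_elt nzs zs nzs nzs"
definition elEp :: "('a::field) grpring" where "elEp = supp_elt nzs nzs nzs zs"
definition elEm :: "('a::field) grpring" where "elEm = supp_elt zs nzs nzs nzs"

definition SCmod :: "('a::field) grpring set" where
  "SCmod = {x. \<exists>a b c dp dm ep em :: int.
     x = (\<lambda>g. a * elA g + b * elB g + c * elC g + dp * elDp g + dm * elDm g
              + ep * elEp g + em * elEm g)}"

end

theory Submission
  imports Defs "HOL-Combinatorics.Transposition"
begin

text \<open>
  The module SC consists exactly of the integer functions on SL2 that depend only on the zero
  pattern of a matrix. Map a matrix to the ordered pair of points of the projective line spanned
  by its two columns: the image is the set of pairs of distinct points and every fibre has q - 1
  elements. The zero pattern of h only records which column points are \<infinity> or 0, and the zero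
  pattern of h\<inverse>g records which column points of h coincide with which column points of g.
  Hence (x * y)(g) is a sum over pairs of distinct points that depends only on the column points
  of g and is unchanged under any permutation of the projective line fixing \<infinity> and 0; matrices
  with the same zero pattern have column points related by such a permutation.
\<close>

fun det2 :: "('a::field) mat2 \<Rightarrow> 'a" where
  "det2 (a, b, c, d) = a * d - b * c"

fun sl2_inv :: "('a::field) mat2 \<Rightarrow> 'a mat2" where
  "sl2_inv (a, b, c, d) = (d, -b, -c, a)"

lemma SL2_eq: "SL2 = {h. det2 h = 1}"
  by (auto simp: SL2_def)

lemma mem_SL2_iff [simp]: "(a, b, c, d) \<in> SL2 \<longleftrightarrow> a * d - b * c = 1"
  by (simp add: SL2_def)

lemma det2_mmul: "det2 (mmul h k) = det2 h * det2 k"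
  by (cases h; cases k) (simp add: algebra_simps)

lemma mmul_assoc: "mmul (mmul g h) k = mmul g (mmul h k)"
  by (cases g; cases h; cases k) (simp add: algebra_simps)

lemma mmul_one_left [simp]: "mmul (1, 0, 0, 1) h = h"
  by (cases h) simp

lemma mmul_sl2_inv_left: "h \<in> SL2 \<Longrightarrow> mmul (sl2_inv h) h = (1, 0, 0, 1)"
  by (cases h) (simp add: algebra_simps)

lemma mmul_sl2_inv_right: "h \<in> SL2 \<Longrightarrow> mmul h (sl2_inv h) = (1, 0, 0, 1)"
  by (cases h) (simp add: algebra_simps)

lemma mmul_mem_SL2: "h \<in> SL2 \<Longrightarrow> k \<in> SL2 \<Longrightarrow> mmul h k \<in> SL2"
  by (simp add: SL2_eq det2_mmul)

lemma sl2_inv_mem_SL2: "h \<in> SL2 \<Longrightarrow> sl2_inv h \<in> SL2"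
  by (cases h) (simp add: algebra_simps)

lemma gr_mult_notin_SL2:
  assumes "g \<notin> SL2"
  shows "gr_mult x y g = 0"
proof -
  have no_factorisation: "{(h, k). h \<in> SL2 \<and> k \<in> SL2 \<and> mmul h k = g} = {}"
    using assms mmul_mem_SL2 by blast
  show ?thesis
    unfolding gr_mult_def no_factorisation by simp
qed

lemma gr_mult_eq_sum:
  assumes g: "g \<in> SL2"
  shows "gr_mult x y g = (\<Sum>h\<in>SL2. x h * y (mmul (sl2_inv h) g))"
proof -
  have "{(h, k). h \<in> SL2 \<and> k \<in> SL2 \<and> mmul h k = g} = (\<lambda>h. (h, mmul (sl2_inv h) g)) ` SL2"
  proof (intro equalityI subsetI)
    fix p assume "p \<in> {(h, k). h \<in> SL2 \<and> k \<in> SL2 \<and> mmul h k = g}"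
    then obtain h k where "p = (h, k)" "h \<in> SL2" "mmul h k = g" by blast
    moreover have "mmul (sl2_inv h) (mmul h k) = k"
      using \<open>h \<in> SL2\<close> by (simp flip: mmul_assoc add: mmul_sl2_inv_left)
    ultimately show "p \<in> (\<lambda>h. (h, mmul (sl2_inv h) g)) ` SL2" by auto
  next
    fix p assume "p \<in> (\<lambda>h. (h, mmul (sl2_inv h) g)) ` SL2"
    then obtain h where "p = (h, mmul (sl2_inv h) g)" "h \<in> SL2" by blast
    then show "p \<in> {(h, k). h \<in> SL2 \<and> k \<in> SL2 \<and> mmul h k = g}"
      using g by (simp flip: mmul_assoc add: mmul_sl2_inv_right mmul_mem_SL2 sl2_inv_mem_SL2)
  qed
  moreover have "inj_on (\<lambda>h. (h, mmul (sl2_inv h) g)) SL2" by (rule inj_onI) simp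
  ultimately show ?thesis
    by (simp add: gr_mult_def sum.reindex)
qed

definition zero_pattern :: "('a::zero) mat2 \<Rightarrow> bool \<times> bool \<times> bool \<times> bool" where
  "zero_pattern = (\<lambda>(a, b, c, d). (a = 0, b = 0, c = 0, d = 0))"

definition pattern_invariant :: "('a::field) grpring \<Rightarrow> bool" where
  "pattern_invariant x \<longleftrightarrow> (\<forall>g. g \<notin> SL2 \<longrightarrow> x g = 0) \<and>
     (\<forall>g\<in>SL2. \<forall>g'\<in>SL2. zero_pattern g = zero_pattern g' \<longrightarrow> x g = x g')"

definition pattern_value :: "('a::field) grpring \<Rightarrow> bool \<times> bool \<times> bool \<times> bool \<Rightarrow> int" where
  "pattern_value x p = x (SOME h. h \<in> SL2 \<and> zero_pattern h = p)"

lemma pattern_value_zero_pattern: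
  "pattern_invariant x \<Longrightarrow> h \<in> SL2 \<Longrightarrow> x h = pattern_value x (zero_pattern h)"
  unfolding pattern_value_def pattern_invariant_def by (metis (mono_tags, lifting) someI)

lemma generators_eq:
  fixes a b c d :: "'a::field"
  defines "g \<equiv> (a, b, c, d)"
  shows
    "elA g = (if g \<in> SL2 \<and> zero_pattern g = (False, True, True, False) then 1 else 0)"
    "elB g = (if g \<in> SL2 \<and> zero_pattern g = (True, False, False, True) then 1 else 0)"
    "elC g = (if g \<in> SL2 \<and> zero_pattern g = (False, False, False, False) then 1 else 0)"
    "elDp g = (if g \<in> SL2 \<and> zero_pattern g = (False, False, True, False) then 1 else 0)"
    "elDm g = (if g \<in> SL2 \<and> zero_pattern g = (False, True, False, False) then 1 else 0)"
    "elEp g = (if g \<in> SL2 \<and> zero_pattern g = (False, False, False, True) then 1 else 0)"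
    "elEm g = (if g \<in> SL2 \<and> zero_pattern g = (True, False, False, False) then 1 else 0)"
  by (auto simp: g_def elA_def elB_def elC_def elDp_def elDm_def elEp_def elEm_def
      supp_elt_def nzs_def zs_def zero_pattern_def)

lemma zero_pattern_SL2_cases:
  fixes h :: "('a::field) mat2"
  assumes "h \<in> SL2"
  shows "zero_pattern h \<in> {(False, True, True, False), (True, False, False, True),
    (False, False, False, False), (False, False, True, False), (False, True, False, False),
    (False, False, False, True), (True, False, False, False)}"
proof -
  obtain a b c d where h: "h = (a, b, c, d)" by (cases h)
  with assms have "a * d - b * c = 1" by simp
  then show ?thesis
    by (cases "a = 0"; cases "b = 0"; cases "c = 0"; cases "d = 0") (simp_all add: h zero_pattern_def)
qed

lemma SCmod_iff_pattern_invariant: "x \<in> SCmod \<longleftrightarrow> pattern_invariant x"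
proof
  assume "x \<in> SCmod"
  then obtain a b c dp dm ep em :: int where x: "x = (\<lambda>g. a * elA g + b * elB g + c * elC g
      + dp * elDp g + dm * elDm g + ep * elEp g + em * elEm g)"
    by (auto simp: SCmod_def)
  have "x g = x g'" if "zero_pattern g = zero_pattern g'" "g \<in> SL2" "g' \<in> SL2" for g g'
    using that by (cases g; cases g') (simp add: x generators_eq)
  moreover have "x g = 0" if "g \<notin> SL2" for g
    using that by (cases g) (simp add: x generators_eq)
  ultimately show "pattern_invariant x"
    unfolding pattern_invariant_def by blast
next
  assume x: "pattern_invariant x"
  let ?v = "pattern_value x"
  have "x g = ?v (False, True, True, False) * elA g + ?v (True, False, False, True) * elB g
      + ?v (False, False, False, False) * elC g + ?v (False, False, True, False) * elDp g
      + ?v (False, True, False, False) * elDm g + ?v (False, False, False, True) * elEp g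
      + ?v (True, False, False, False) * elEm g" for g :: "'a mat2"
  proof (cases "g \<in> SL2")
    case True
    then show ?thesis
      using pattern_value_zero_pattern[OF x True] zero_pattern_SL2_cases[OF True]
      by (cases g) (elim insertE emptyE; simp add: generators_eq)
  next
    case False
    then show ?thesis
      using x by (cases g) (simp add: pattern_invariant_def generators_eq)
  qed
  then show "x \<in> SCmod"
    unfolding SCmod_def by blast
qed

text \<open>The projective line is modelled by the option type, with None the point at infinity.\<close>

definition proj_point :: "('a::field) \<times> 'a \<Rightarrow> 'a option" where
  "proj_point = (\<lambda>(u, v). if u = 0 then None else Some (v / u))"

definition col_points :: "('a::field) mat2 \<Rightarrow> 'a option \<times> 'a option" where
  "col_points = (\<lambda>(a, b, c, d). (proj_point (a, c), proj_point (b, d)))"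

fun point_vec :: "('a::field) option \<Rightarrow> 'a \<times> 'a" where
  "point_vec None = (0, 1)"
| "point_vec (Some t) = (1, t)"

lemma proj_point_eq_iff:
  fixes u v u' v' :: "'a::field"
  assumes "(u, v) \<noteq> (0, 0)" "(u', v') \<noteq> (0, 0)"
  shows "proj_point (u, v) = proj_point (u', v') \<longleftrightarrow> u * v' = v * u'"
  using assms by (auto simp: proj_point_def field_simps)

lemma proj_point_scale: "l \<noteq> 0 \<Longrightarrow> proj_point (l * u, l * v) = proj_point (u, v)"
  by (simp add: proj_point_def)

lemma proj_point_point_vec [simp]: "proj_point (point_vec P) = P"
  by (cases P) (simp_all add: proj_point_def)

lemma point_vec_nonzero: "point_vec P \<noteq> (0, 0)"
  by (cases P) simp_all

lemma eq_scale_point_vec: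
  assumes "(u, v) \<noteq> (0, 0)"
  obtains l where "l \<noteq> 0" "(u, v) = (l * fst (point_vec (proj_point (u, v))),
    l * snd (point_vec (proj_point (u, v))))"
proof (cases "u = 0")
  case True
  with assms show ?thesis by (intro that[of v]) (simp_all add: proj_point_def)
next
  case False
  then show ?thesis by (intro that[of u]) (simp_all add: proj_point_def)
qed

lemma SL2_columns_nonzero:
  assumes "(a, b, c, d) \<in> SL2"
  shows "(a, c) \<noteq> (0, 0)" "(b, d) \<noteq> (0, 0)"
  using assms by auto

lemma col_points_distinct:
  assumes "h \<in> SL2"
  shows "fst (col_points h) \<noteq> snd (col_points h)"
proof -
  obtain a b c d where h: "h = (a, b, c, d)" by (cases h)
  with assms have "a * d - b * c = 1" by simp
  then have "a * d \<noteq> c * b" by (auto simp: algebra_simps)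
  moreover have "(a, c) \<noteq> (0, 0)" "(b, d) \<noteq> (0, 0)"
    using SL2_columns_nonzero assms h by blast+
  ultimately show ?thesis
    by (simp add: h col_points_def proj_point_eq_iff)
qed

definition points_pattern :: "('a::zero) option \<times> 'a option \<Rightarrow> bool \<times> bool \<times> bool \<times> bool" where
  "points_pattern = (\<lambda>(P, Q). (P = None, Q = None, P = Some 0, Q = Some 0))"

definition incidence_pattern :: "'b \<times> 'b \<Rightarrow> 'b \<times> 'b \<Rightarrow> bool \<times> bool \<times> bool \<times> bool" where
  "incidence_pattern = (\<lambda>(P, Q) (P', Q'). (Q = P', Q = Q', P = P', P = Q'))"

lemma zero_pattern_eq_points_pattern:
  "h \<in> SL2 \<Longrightarrow> zero_pattern h = points_pattern (col_points h)"
  by (cases h) (auto simp: zero_pattern_def points_pattern_def col_points_def proj_point_def)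

text \<open>The entries of h\<inverse>g are the determinants formed by a column of h and a column of g.\<close>

lemma zero_pattern_sl2_inv_mmul:
  assumes "h \<in> SL2" "g \<in> SL2"
  shows "zero_pattern (mmul (sl2_inv h) g) = incidence_pattern (col_points h) (col_points g)"
proof -
  obtain a b c d where h: "h = (a, b, c, d)" by (cases h)
  obtain e f k l where g: "g = (e, f, k, l)" by (cases g)
  have "(a, c) \<noteq> (0, 0)" "(b, d) \<noteq> (0, 0)" "(e, k) \<noteq> (0, 0)" "(f, l) \<noteq> (0, 0)"
    using assms SL2_columns_nonzero h g by blast+
  then show ?thesis
    by (auto simp: h g zero_pattern_def incidence_pattern_def col_points_def proj_point_eq_iff
        algebra_simps)
qed

lemma card_col_points_fiber_distinct:
  fixes P Q :: "('a::field) option"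
  assumes "P \<noteq> Q"
  shows "card {h \<in> SL2. col_points h = (P, Q)} = card (nzs :: 'a set)"
proof -
  obtain p1 p2 where p: "point_vec P = (p1, p2)" by (cases "point_vec P")
  obtain q1 q2 where q: "point_vec Q = (q1, q2)" by (cases "point_vec Q")
  have points: "proj_point (p1, p2) = P" "proj_point (q1, q2) = Q"
    using proj_point_point_vec[of P] proj_point_point_vec[of Q] by (simp_all add: p q)
  define \<delta> where "\<delta> = p1 * q2 - p2 * q1"
  have \<delta>: "\<delta> \<noteq> 0"
    using assms points proj_point_eq_iff[of p1 p2 q1 q2] point_vec_nonzero[of P]
      point_vec_nonzero[of Q]
    by (simp add: p q \<delta>_def)
  define \<phi> where "\<phi> = (\<lambda>l. (l * p1, q1 / (l * \<delta>), l * p2, q2 / (l * \<delta>)))"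
  have "inj_on \<phi> nzs"
  proof (rule inj_onI)
    fix l m assume "\<phi> l = \<phi> m"
    then have "l * p1 = m * p1" "l * p2 = m * p2" by (simp_all add: \<phi>_def)
    then show "l = m" using point_vec_nonzero[of P] by (auto simp: p)
  qed
  moreover have "\<phi> ` nzs \<subseteq> {h \<in> SL2. col_points h = (P, Q)}"
  proof (rule image_subsetI)
    fix l :: 'a assume "l \<in> nzs"
    then have l: "l \<noteq> 0" by (simp add: nzs_def)
    have "l * p1 * (q2 / (l * \<delta>)) - q1 / (l * \<delta>) * (l * p2) = (p1 * q2 - p2 * q1) / \<delta>"
      using l \<delta> by (simp add: diff_divide_distrib)
    also have "\<dots> = 1"
      using \<delta> by (simp add: \<delta>_def)
    finally have "l * p1 * (q2 / (l * \<delta>)) - q1 / (l * \<delta>) * (l * p2) = 1" .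
    moreover have "proj_point (q1 / (l * \<delta>), q2 / (l * \<delta>)) = Q"
      using proj_point_scale[of "1 / (l * \<delta>)" q1 q2] l \<delta> points by simp
    ultimately show "\<phi> l \<in> {h \<in> SL2. col_points h = (P, Q)}"
      using proj_point_scale[OF l, of p1 p2] points by (simp add: \<phi>_def col_points_def)
  qed
  moreover have "{h \<in> SL2. col_points h = (P, Q)} \<subseteq> \<phi> ` nzs"
  proof clarify
    fix a b c d :: 'a
    assume h: "(a, b, c, d) \<in> SL2" "col_points (a, b, c, d) = (P, Q)"
    obtain l where l: "l \<noteq> 0" "a = l * p1" "c = l * p2"
      using eq_scale_point_vec[OF SL2_columns_nonzero(1)[OF h(1)]] h(2) p
      by (auto simp: col_points_def)
    obtain m where m: "m \<noteq> 0" "b = m * q1" "d = m * q2"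
      using eq_scale_point_vec[OF SL2_columns_nonzero(2)[OF h(1)]] h(2) q
      by (auto simp: col_points_def)
    have "l * m * \<delta> = 1" using h(1) l m by (simp add: \<delta>_def algebra_simps)
    then have "m = 1 / (l * \<delta>)" using l \<delta> by (simp add: field_simps)
    then have "(a, b, c, d) = \<phi> l" using l m by (simp add: \<phi>_def)
    then show "(a, b, c, d) \<in> \<phi> ` nzs" using l(1) by (simp add: nzs_def)
  qed
  ultimately have "bij_betw \<phi> nzs {h \<in> SL2. col_points h = (P, Q)}"
    by (simp add: bij_betw_def subset_antisym)
  then show ?thesis by (simp add: bij_betw_same_card)
qed

lemma card_col_points_fiber:
  fixes \<omega> :: "('a::field) option \<times> 'a option"
  shows "card {h \<in> SL2. col_points h = \<omega>} = (if fst \<omega> = snd \<omega> then 0 else card (nzs :: 'a set))"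
proof (cases "fst \<omega> = snd \<omega>")
  case True
  then have "{h \<in> SL2. col_points h = \<omega>} = {}"
    using col_points_distinct by fastforce
  then have "card {h \<in> SL2. col_points h = \<omega>} = 0" by (simp only: card.empty)
  with True show ?thesis by simp
qed (use card_col_points_fiber_distinct[of "fst \<omega>" "snd \<omega>"] in simp)

lemma sum_SL2_by_col_points:
  fixes G :: "('a::{field,finite}) option \<times> 'a option \<Rightarrow> int"
  shows "(\<Sum>h\<in>SL2. G (col_points h)) = (\<Sum>\<omega>\<in>UNIV. int (card {h \<in> SL2. col_points h = \<omega>}) * G \<omega>)"
proof -
  have "(\<Sum>h\<in>SL2. G (col_points h)) = (\<Sum>\<omega>\<in>UNIV. \<Sum>h\<in>{h \<in> SL2. col_points h = \<omega>}. G (col_points h))"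
    by (rule sum.group[symmetric]) simp_all
  also have "\<dots> = (\<Sum>\<omega>\<in>UNIV. \<Sum>h\<in>{h \<in> SL2. col_points h = \<omega>}. G \<omega>)"
    by (rule sum.cong) auto
  finally show ?thesis by simp
qed

definition point_convolution :: "(bool \<times> bool \<times> bool \<times> bool \<Rightarrow> int) \<Rightarrow>
    (bool \<times> bool \<times> bool \<times> bool \<Rightarrow> int) \<Rightarrow> ('a::field) option \<times> 'a option \<Rightarrow> int" where
  "point_convolution u v P = (\<Sum>\<omega>\<in>UNIV. int (if fst \<omega> = snd \<omega> then 0 else card (nzs :: 'a set))
      * (u (points_pattern \<omega>) * v (incidence_pattern \<omega> P)))"

lemma gr_mult_eq_point_convolution:
  fixes x y :: "('a::{field,finite}) grpring"
  assumes x: "pattern_invariant x" and y: "pattern_invariant y" and g: "g \<in> SL2"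
  shows "gr_mult x y g = point_convolution (pattern_value x) (pattern_value y) (col_points g)"
proof -
  let ?G = "\<lambda>\<omega>. pattern_value x (points_pattern \<omega>) * pattern_value y (incidence_pattern \<omega> (col_points g))"
  have "gr_mult x y g = (\<Sum>h\<in>SL2. x h * y (mmul (sl2_inv h) g))"
    using g by (rule gr_mult_eq_sum)
  also have "\<dots> = (\<Sum>h\<in>SL2. ?G (col_points h))"
  proof (rule sum.cong[OF refl])
    fix h :: "'a mat2" assume h: "h \<in> SL2"
    have "x h = pattern_value x (points_pattern (col_points h))"
      using h by (simp add: pattern_value_zero_pattern[OF x] zero_pattern_eq_points_pattern)
    moreover have "y (mmul (sl2_inv h) g)
        = pattern_value y (incidence_pattern (col_points h) (col_points g))"
      using h g by (simp add: pattern_value_zero_pattern[OF y] mmul_mem_SL2 sl2_inv_mem_SL2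
          zero_pattern_sl2_inv_mmul)
    ultimately show "x h * y (mmul (sl2_inv h) g) = ?G (col_points h)" by simp
  qed
  also have "\<dots> = (\<Sum>\<omega>\<in>UNIV. int (card {h \<in> SL2. col_points h = \<omega>}) * ?G \<omega>)"
    by (rule sum_SL2_by_col_points[of ?G])
  also have "\<dots> = point_convolution (pattern_value x) (pattern_value y) (col_points g)"
    unfolding point_convolution_def
    by (simp add: card_col_points_fiber)
  finally show ?thesis .
qed

lemma points_pattern_map_prod:
  assumes "inj \<sigma>" "\<sigma> None = None" "\<sigma> (Some 0) = Some 0"
  shows "points_pattern (map_prod \<sigma> \<sigma> \<omega>) = points_pattern \<omega>"
proof -
  have "\<sigma> R = None \<longleftrightarrow> R = None" "\<sigma> R = Some 0 \<longleftrightarrow> R = Some 0" for R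
    using assms by (metis injD)+
  then show ?thesis by (cases \<omega>) (simp add: points_pattern_def)
qed

lemma incidence_pattern_map_prod:
  assumes "inj \<sigma>"
  shows "incidence_pattern (map_prod \<sigma> \<sigma> \<omega>) (\<sigma> P, \<sigma> Q) = incidence_pattern \<omega> (P, Q)"
  using assms by (cases \<omega>) (auto simp: incidence_pattern_def dest: injD)

lemma point_convolution_perm:
  fixes \<sigma> :: "('a::field) option \<Rightarrow> 'a option"
  assumes "bij \<sigma>" "\<sigma> None = None" "\<sigma> (Some 0) = Some 0"
  shows "point_convolution u v (\<sigma> P, \<sigma> Q) = point_convolution u v (P, Q)"
proof -
  have inj: "inj \<sigma>" using assms(1) by (rule bij_is_inj)
  have reindex: "(\<Sum>\<omega>\<in>UNIV. F \<omega>) = (\<Sum>\<omega>\<in>UNIV. F (map_prod \<sigma> \<sigma> \<omega>))" for F :: "_ \<Rightarrow> int"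
    by (rule sum.reindex_bij_betw[symmetric]) (use bij_betw_map_prod[OF assms(1) assms(1)] in simp)
  show ?thesis
    unfolding point_convolution_def
    by (subst reindex) (simp add: points_pattern_map_prod[OF inj assms(2,3)]
        incidence_pattern_map_prod[OF inj] inj_eq[OF inj])
qed

lemma exists_perm_fixing_None_zero:
  fixes P Q P' Q' :: "('a::zero) option"
  assumes "P \<noteq> Q" "P' \<noteq> Q'" "points_pattern (P, Q) = points_pattern (P', Q')"
  obtains \<sigma> where "bij \<sigma>" "\<sigma> None = None" "\<sigma> (Some 0) = Some 0" "\<sigma> P = P'" "\<sigma> Q = Q'"
proof
  let ?\<sigma> = "transpose Q' (transpose P P' Q) \<circ> transpose P P'"
  show "bij ?\<sigma>" by (simp add: bij_comp)
  show "?\<sigma> None = None" "?\<sigma> (Some 0) = Some 0" "?\<sigma> P = P'" "?\<sigma> Q = Q'"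
    using assms by (auto simp: points_pattern_def transpose_def)
qed

lemma pattern_invariant_gr_mult:
  fixes x y :: "('a::{field,finite}) grpring"
  assumes x: "pattern_invariant x" and y: "pattern_invariant y"
  shows "pattern_invariant (gr_mult x y)"
  unfolding pattern_invariant_def
proof (intro conjI allI ballI impI)
  fix g :: "'a mat2" assume "g \<notin> SL2"
  then show "gr_mult x y g = 0" by (rule gr_mult_notin_SL2)
next
  fix g g' :: "'a mat2"
  assume g: "g \<in> SL2" and g': "g' \<in> SL2" and "zero_pattern g = zero_pattern g'"
  obtain P Q where PQ: "col_points g = (P, Q)" by (cases "col_points g")
  obtain P' Q' where PQ': "col_points g' = (P', Q')" by (cases "col_points g'")
  have "P \<noteq> Q" "P' \<noteq> Q'"
    using col_points_distinct[OF g] col_points_distinct[OF g'] PQ PQ' by simp_all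
  moreover have "points_pattern (P, Q) = points_pattern (P', Q')"
    using \<open>zero_pattern g = zero_pattern g'\<close> g g' PQ PQ' by (simp add: zero_pattern_eq_points_pattern)
  ultimately obtain \<sigma> where \<sigma>: "bij \<sigma>" "\<sigma> None = None" "\<sigma> (Some 0) = Some 0" "\<sigma> P = P'" "\<sigma> Q = Q'"
    by (rule exists_perm_fixing_None_zero)
  have "gr_mult x y g' = point_convolution (pattern_value x) (pattern_value y) (\<sigma> P, \<sigma> Q)"
    using gr_mult_eq_point_convolution[OF x y g'] PQ' \<sigma> by simp
  also have "\<dots> = gr_mult x y g"
    using gr_mult_eq_point_convolution[OF x y g] PQ point_convolution_perm[OF \<sigma>(1-3)] by simp
  finally show "gr_mult x y g = gr_mult x y g'" by simp
qed

theorem theorem2p1: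
  fixes x y :: "('a::{field,finite}) grpring"
  assumes "card (UNIV :: 'a set) > 2"
    and "x \<in> SCmod" and "y \<in> SCmod"
  shows "gr_mult x y \<in> SCmod"
  using assms(2,3) pattern_invariant_gr_mult by (simp add: SCmod_iff_pattern_invariant)

end
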